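(* The graph $L_{6,1}$ has a perfect partition; that is, the set of all $265$ derangements of $\{1,\dots,6\}$ (equivalently, all $6\times 6$ permutation matrices with zero diagonal) can be partitioned into subsets each of which consists of $5$ permutation matrices summing to $J_6-I_6$.
   Context: $L_{n,1}=K_{n,n}-nK_{1,1}$ is the complete bipartite graph $K_{n,n}$ with a perfect matching removed; its biadjacency matrix is $J_n-I_n$, where $J_n$ is the all-ones $n\times n$ matrix. Its perfect matchings correspond exactly to derangements of $\{1,\dots,n\}$ (permutation matrices $P$ with $P\le J_n-I_n$ entrywise). A regular bipartite graph $G$ has a perfect partition if its set of perfect matchings can be partitioned into parts each of which is a $1$-factorization of $G$ (a set of pairwise edge-disjoint perfect matchings whose union is $G$); in matrix language, the set of permutation matrices $P\le A(G)$ can be partitioned into subsets each summing to $A(G)$. *)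

theory Defs
  imports "HOL-Combinatorics.Permutations" "HOL-Library.Disjoint_Sets"
begin

text \<open>Derangements of {1..n}: permutations of {1..n} without fixed points,
  i.e. permutation matrices P with P \<le> J_n - I_n entrywise
  (P has entry (i,j) equal to 1 iff p i = j).\<close>
definition derangements :: "nat \<Rightarrow> (nat \<Rightarrow> nat) set" where
  "derangements n = {p. p permutes {1..n} \<and> (\<forall>i\<in>{1..n}. p i \<noteq> i)}"

definition perm_mat :: "(nat \<Rightarrow> nat) \<Rightarrow> nat \<Rightarrow> nat \<Rightarrow> nat" where
  "perm_mat p i j = (if p i = j then 1 else 0)"

text \<open>Entry (i,j) of the biadjacency matrix J_n - I_n of L_{n,1}.\<close>
definition JmI :: "nat \<Rightarrow> nat \<Rightarrow> nat" where
  "JmI i j = (if i = j then 0 else 1)"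

definition sums_to_JmI :: "nat \<Rightarrow> (nat \<Rightarrow> nat) set \<Rightarrow> bool" where
  "sums_to_JmI n S \<longleftrightarrow> (\<forall>i\<in>{1..n}. \<forall>j\<in>{1..n}. (\<Sum>p\<in>S. perm_mat p i j) = JmI i j)"

text \<open>L_{n,1} has a perfect partition: the set of its perfect matchings
  (derangements) is partitioned into parts each summing to J_n - I_n.\<close>
definition has_perfect_partition_L :: "nat \<Rightarrow> bool" where
  "has_perfect_partition_L n \<longleftrightarrow>
     (\<exists>P. partition_on (derangements n) P \<and> (\<forall>S\<in>P. sums_to_JmI n S))"

end

theory Submission
  imports Defs "HOL-Combinatorics.Multiset_Permutations"
begin

(* n - 1 derangements of {1..n} sum to J_n - I_n as soon as, in every row i, their values are
   pairwise distinct, since these n - 1 values then exhaust {1..n} - {i}. The 265 derangements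
   of {1..6} split into 53 such quintuples, listed explicitly; that the quintuples are disjoint
   and exhaust all derangements is checked by evaluation, the number 265 being obtained by
   enumerating the permutations of {1..6}. *)

text \<open>Lists are indexed from 0: entry k of the list is the image of k + 1.\<close>

definition perm_of_list :: "nat list \<Rightarrow> nat \<Rightarrow> nat" where
  "perm_of_list xs i = (if i \<in> {1..length xs} then xs ! (i - 1) else i)"

definition derangement_lists :: "nat \<Rightarrow> nat list set" where
  "derangement_lists n = {xs \<in> permutations_of_set {1..n}. \<forall>i<n. xs ! i \<noteq> Suc i}"

lemma distinct_set_eq_atLeastAtMost_iff:
  assumes "length xs = n" "distinct xs"
  shows "set xs = {1..n} \<longleftrightarrow> set xs \<subseteq> {1..n}"
  using assms card_subset_eq[of "{1..n}" "set xs"] distinct_card[of xs] by auto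

lemma mem_derangement_lists_iff:
  "xs \<in> derangement_lists n \<longleftrightarrow>
     length xs = n \<and> distinct xs \<and> set xs \<subseteq> {1..n} \<and> (\<forall>i<n. xs ! i \<noteq> Suc i)"
  using distinct_set_eq_atLeastAtMost_iff[of xs n] distinct_card[of xs]
  by (auto simp: derangement_lists_def permutations_of_set_def)

lemma perm_of_list_image: "perm_of_list xs ` {1..length xs} = set xs"
proof -
  have "perm_of_list xs ` {1..length xs} = (!) xs ` (\<lambda>i. i - 1) ` {1..length xs}"
    by (auto simp: perm_of_list_def image_image)
  also have "(\<lambda>i. i - 1) ` {1..length xs} = {..<length xs}"
    by (auto simp: image_iff intro!: bexI[of _ "Suc _"])
  finally show ?thesis
    by (auto simp: set_conv_nth)
qed

lemma perm_of_list_permutes: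
  assumes "length xs = n" "distinct xs" "set xs \<subseteq> {1..n}"
  shows "perm_of_list xs permutes {1..n}"
proof (rule bij_imp_permutes)
  have "perm_of_list xs ` {1..n} = {1..n}"
    using perm_of_list_image[of xs] distinct_set_eq_atLeastAtMost_iff assms by auto
  moreover have "inj_on (perm_of_list xs) {1..n}"
    using assms by (auto simp: inj_on_def perm_of_list_def nth_eq_iff_index_eq)
  ultimately show "bij_betw (perm_of_list xs) {1..n} {1..n}"
    by (simp add: bij_betw_def)
qed (auto simp: perm_of_list_def assms(1))

lemma perm_of_list_map_upt:
  assumes "p permutes {1..n}"
  shows "perm_of_list (map p [1..<Suc n]) = p"
  using permutes_not_in[OF assms] by (auto simp: fun_eq_iff perm_of_list_def simp del: upt_Suc)

lemma map_upt_perm_of_list: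
  assumes "length xs = n"
  shows "map (perm_of_list xs) [1..<Suc n] = xs"
  by (rule nth_equalityI) (auto simp: perm_of_list_def assms simp del: upt_Suc)

lemma perm_of_list_in_derangements:
  assumes xs: "xs \<in> derangement_lists n"
  shows "perm_of_list xs \<in> derangements n"
proof -
  have no_fix: "\<forall>k<n. xs ! k \<noteq> Suc k" and len: "length xs = n"
    using xs by (simp_all add: mem_derangement_lists_iff)
  have "perm_of_list xs i \<noteq> i" if i: "i \<in> {1..n}" for i
  proof -
    have "i - 1 < n" "Suc (i - 1) = i"
      using i by auto
    then have "xs ! (i - 1) \<noteq> i"
      using no_fix by metis
    then show ?thesis
      using i len by (simp add: perm_of_list_def)
  qed
  moreover have "perm_of_list xs permutes {1..n}"
    using xs perm_of_list_permutes by (auto simp: mem_derangement_lists_iff)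
  ultimately show ?thesis
    by (simp add: derangements_def)
qed

lemma map_upt_in_derangement_lists:
  assumes "p \<in> derangements n"
  shows "map p [1..<Suc n] \<in> derangement_lists n"
proof -
  have p: "p permutes {1..n}" "\<forall>i\<in>{1..n}. p i \<noteq> i"
    using assms by (auto simp: derangements_def)
  have upt: "set [1..<Suc n] = {1..n}"
    by auto
  have "distinct (map p [1..<Suc n])"
    using permutes_inj_on[OF p(1)] by (simp add: distinct_map)
  moreover have "set (map p [1..<Suc n]) \<subseteq> {1..n}"
    using permutes_in_image[OF p(1)] by (simp add: upt image_subset_iff del: upt_Suc)
  moreover have "map p [1..<Suc n] ! i \<noteq> Suc i" if "i < n" for i
  proof -
    have "map p [1..<Suc n] ! i = p (Suc i)" "Suc i \<in> {1..n}"
      using that by (simp_all del: upt_Suc)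
    then show ?thesis
      using p(2) by simp
  qed
  ultimately show ?thesis
    by (simp add: mem_derangement_lists_iff del: upt_Suc)
qed

lemma bij_betw_perm_of_list_derangements:
  "bij_betw perm_of_list (derangement_lists n) (derangements n)"
proof (rule bij_betw_byWitness[where f' = "\<lambda>p. map p [1..<Suc n]"])
  show "\<forall>xs\<in>derangement_lists n. map (perm_of_list xs) [1..<Suc n] = xs"
    using map_upt_perm_of_list by (auto simp: mem_derangement_lists_iff simp del: upt_Suc)
  show "\<forall>p\<in>derangements n. perm_of_list (map p [1..<Suc n]) = p"
    using perm_of_list_map_upt by (auto simp: derangements_def simp del: upt_Suc)
  show "perm_of_list ` derangement_lists n \<subseteq> derangements n"
    using perm_of_list_in_derangements by blast
  show "(\<lambda>p. map p [1..<Suc n]) ` derangements n \<subseteq> derangement_lists n"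
    using map_upt_in_derangement_lists by blast
qed

lemma card_derangement_lists:
  "card (derangement_lists n) =
     length (filter (\<lambda>xs. \<forall>i<n. xs ! i \<noteq> Suc i) (permutations_of_set_list [1..<Suc n]))"
proof -
  have "permutations_of_set {1..n} = set (permutations_of_set_list [1..<Suc n])"
    using permutations_of_list[of "[1..<Suc n]"]
    by (simp add: atLeastLessThanSuc_atLeastAtMost del: upt_Suc)
  then have "derangement_lists n =
      set (filter (\<lambda>xs. \<forall>i<n. xs ! i \<noteq> Suc i) (permutations_of_set_list [1..<Suc n]))"
    by (auto simp: derangement_lists_def)
  moreover have
    "distinct (filter (\<lambda>xs. \<forall>i<n. xs ! i \<noteq> Suc i) (permutations_of_set_list [1..<Suc n]))"
    by (simp add: distinct_permutations_of_set_list del: upt_Suc)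
  ultimately show ?thesis
    by (simp only: distinct_card)
qed

lemma sums_to_JmI_if_inj_on_rows:
  assumes S: "S \<subseteq> derangements n" and card_S: "card S = n - 1"
    and rows: "\<forall>i\<in>{1..n}. inj_on (\<lambda>p. p i) S"
  shows "sums_to_JmI n S"
  unfolding sums_to_JmI_def
proof (intro ballI)
  fix i j assume i: "i \<in> {1..n}" and j: "j \<in> {1..n}"
  have "finite S"
    using S finite_permutations[of "{1..n}"] by (auto simp: derangements_def intro: finite_subset)
  have "p i \<in> {1..n} - {i}" if "p \<in> S" for p
  proof -
    have "p permutes {1..n}" "p i \<noteq> i"
      using S that i by (auto simp: derangements_def)
    then show ?thesis
      using i permutes_in_image[of p "{1..n}" i] by simp
  qed
  then have "(\<lambda>p. p i) ` S \<subseteq> {1..n} - {i}"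
    by (rule image_subsetI)
  moreover have "card ((\<lambda>p. p i) ` S) = card ({1..n} - {i})"
    using card_S card_image[OF rows[rule_format, OF i]] i by simp
  ultimately have row: "(\<lambda>p. p i) ` S = {1..n} - {i}"
    by (intro card_subset_eq) auto
  have "(\<Sum>p\<in>S. perm_mat p i j) = card {p \<in> S. p i = j}"
    using \<open>finite S\<close> by (simp add: perm_mat_def sum.inter_filter[symmetric])
  also have "\<dots> = card ((\<lambda>p. p i) ` {p \<in> S. p i = j})"
    using rows i by (intro card_image[symmetric]) (auto intro: inj_on_subset)
  also have "(\<lambda>p. p i) ` {p \<in> S. p i = j} = (\<lambda>p. p i) ` S \<inter> {j}"
    by blast
  also have "\<dots> = ({1..n} - {i}) \<inter> {j}"
    by (simp only: row)
  also have "card (({1..n} - {i}) \<inter> {j}) = JmI i j"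
    using j by (auto simp: JmI_def)
  finally show "(\<Sum>p\<in>S. perm_mat p i j) = JmI i j" .
qed

lemma one_factorization_perm_of_list:
  assumes D: "set xss \<subseteq> derangement_lists n" and len: "length xss = n - 1"
    and rows: "\<forall>i<n. distinct (map (\<lambda>xs. xs ! i) xss)"
  shows "card (perm_of_list ` set xss) = n - 1 \<and> sums_to_JmI n (perm_of_list ` set xss)"
proof -
  have inj: "inj_on perm_of_list (set xss)"
    using bij_betw_imp_inj_on[OF bij_betw_perm_of_list_derangements] D by (rule inj_on_subset)
  have "distinct xss"
  proof (cases n)
    case 0
    then show ?thesis using len by simp
  next
    case Suc
    then show ?thesis using rows distinct_map by blast
  qed
  then have card: "card (perm_of_list ` set xss) = n - 1"
    using card_image[OF inj] len by (simp add: distinct_card)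
  have "inj_on (\<lambda>p. p i) (perm_of_list ` set xss)" if i: "i \<in> {1..n}" for i
  proof (rule inj_on_imageI)
    have "i - 1 < n"
      using i by auto
    then have "inj_on (\<lambda>xs. xs ! (i - 1)) (set xss)"
      using rows by (simp add: distinct_map)
    moreover have "perm_of_list xs i = xs ! (i - 1)" if "xs \<in> set xss" for xs
      using that D i by (auto simp: perm_of_list_def mem_derangement_lists_iff)
    ultimately show "inj_on ((\<lambda>p. p i) \<circ> perm_of_list) (set xss)"
      by (simp add: comp_def cong: inj_on_cong)
  qed
  moreover have "perm_of_list ` set xss \<subseteq> derangements n"
    using bij_betw_imp_surj_on[OF bij_betw_perm_of_list_derangements] D by blast
  ultimately show ?thesis
    using card sums_to_JmI_if_inj_on_rows by blast
qed

lemma partition_on_set_concat: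
  assumes "distinct (concat xss)" "[] \<notin> set xss"
  shows "partition_on (set (concat xss)) (set ` set xss)"
proof (rule partition_onI)
  show "\<Union> (set ` set xss) = set (concat xss)"
    by simp
  show "disjnt p q" if "p \<in> set ` set xss" "q \<in> set ` set xss" "p \<noteq> q" for p q
    using that assms(1) by (auto simp: distinct_concat_iff disjnt_def)
  show "{} \<notin> set ` set xss"
    using assms(2) by auto
qed

lemma all_less_numeral:
  "(\<forall>i<numeral k. P i) \<longleftrightarrow> P (pred_numeral k) \<and> (\<forall>i<pred_numeral k. P i)"
  by (simp add: numeral_eq_Suc All_less_Suc)

definition one_factorizations_L6 :: "nat list list list" where
  "one_factorizations_L6 =
   [[[2,3,4,5,6,1], [3,5,6,1,4,2], [4,6,2,3,1,5], [5,4,1,6,2,3], [6,1,5,2,3,4]],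
    [[2,4,1,5,6,3], [3,6,5,1,2,4], [4,1,6,2,3,5], [5,3,4,6,1,2], [6,5,2,3,4,1]],
    [[2,5,4,6,1,3], [3,4,1,5,6,2], [4,6,5,2,3,1], [5,3,6,1,2,4], [6,1,2,3,4,5]],
    [[2,4,1,6,3,5], [3,5,6,2,4,1], [4,6,2,5,1,3], [5,3,4,1,6,2], [6,1,5,3,2,4]],
    [[2,1,6,3,4,5], [3,4,2,5,6,1], [4,6,5,2,1,3], [5,3,1,6,2,4], [6,5,4,1,3,2]],
    [[2,5,4,6,3,1], [3,6,5,1,4,2], [4,3,1,2,6,5], [5,1,6,3,2,4], [6,4,2,5,1,3]],
    [[2,3,4,6,1,5], [3,5,6,1,2,4], [4,1,5,2,6,3], [5,6,1,3,4,2], [6,4,2,5,3,1]],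
    [[2,5,6,3,1,4], [3,6,4,1,2,5], [4,1,2,5,6,3], [5,3,1,6,4,2], [6,4,5,2,3,1]],
    [[2,6,4,5,1,3], [3,5,1,2,6,4], [4,1,2,6,3,5], [5,3,6,1,4,2], [6,4,5,3,2,1]],
    [[2,6,1,5,3,4], [3,5,4,6,2,1], [4,3,2,1,6,5], [5,1,6,3,4,2], [6,4,5,2,1,3]],
    [[2,3,6,1,4,5], [3,6,1,5,2,4], [4,1,5,3,6,2], [5,4,2,6,1,3], [6,5,4,2,3,1]],
    [[2,6,1,5,4,3], [3,5,4,2,6,1], [4,1,6,3,2,5], [5,3,2,6,1,4], [6,4,5,1,3,2]],
    [[2,5,6,1,4,3], [3,4,5,2,6,1], [4,3,1,6,2,5], [5,6,4,3,1,2], [6,1,2,5,3,4]],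
    [[2,3,1,6,4,5], [3,5,2,1,6,4], [4,6,5,3,2,1], [5,4,6,2,1,3], [6,1,4,5,3,2]],
    [[2,4,6,5,1,3], [3,5,1,6,4,2], [4,1,2,3,6,5], [5,6,4,2,3,1], [6,3,5,1,2,4]],
    [[2,5,4,1,6,3], [3,1,5,6,4,2], [4,6,2,5,3,1], [5,3,6,2,1,4], [6,4,1,3,2,5]],
    [[2,5,1,6,4,3], [3,1,5,2,6,4], [4,6,2,1,3,5], [5,4,6,3,1,2], [6,3,4,5,2,1]],
    [[2,1,4,6,3,5], [3,4,6,5,1,2], [4,3,5,2,6,1], [5,6,2,1,4,3], [6,5,1,3,2,4]],
    [[2,6,4,5,3,1], [3,5,2,6,1,4], [4,3,6,1,2,5], [5,4,1,3,6,2], [6,1,5,2,4,3]],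
    [[2,4,5,1,6,3], [3,5,1,6,2,4], [4,3,6,5,1,2], [5,6,2,3,4,1], [6,1,4,2,3,5]],
    [[2,6,4,1,3,5], [3,4,5,6,2,1], [4,5,6,3,1,2], [5,3,1,2,6,4], [6,1,2,5,4,3]],
    [[2,3,4,1,6,5], [3,5,6,2,1,4], [4,6,1,5,2,3], [5,4,2,6,3,1], [6,1,5,3,4,2]],
    [[2,3,1,5,6,4], [3,1,2,6,4,5], [4,5,6,2,3,1], [5,6,4,1,2,3], [6,4,5,3,1,2]],
    [[2,3,5,1,6,4], [3,1,6,5,4,2], [4,5,2,6,1,3], [5,6,4,3,2,1], [6,4,1,2,3,5]],
    [[2,5,1,6,3,4], [3,6,4,5,2,1], [4,3,5,1,6,2], [5,1,6,2,4,3], [6,4,2,3,1,5]],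
    [[2,4,6,5,3,1], [3,5,4,1,6,2], [4,1,5,6,2,3], [5,6,2,3,1,4], [6,3,1,2,4,5]],
    [[2,4,1,3,6,5], [3,5,4,6,1,2], [4,6,5,1,2,3], [5,1,6,2,3,4], [6,3,2,5,4,1]],
    [[2,5,6,1,3,4], [3,4,5,6,1,2], [4,3,2,5,6,1], [5,6,1,2,4,3], [6,1,4,3,2,5]],
    [[2,1,5,6,3,4], [3,6,4,5,1,2], [4,5,1,2,6,3], [5,4,6,3,2,1], [6,3,2,1,4,5]],
    [[2,1,4,5,6,3], [3,5,2,6,4,1], [4,6,1,3,2,5], [5,4,6,1,3,2], [6,3,5,2,1,4]],
    [[2,5,4,3,6,1], [3,6,1,2,4,5], [4,1,5,6,3,2], [5,4,6,1,2,3], [6,3,2,5,1,4]],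
    [[2,6,1,3,4,5], [3,1,2,5,6,4], [4,3,5,6,1,2], [5,4,6,2,3,1], [6,5,4,1,2,3]],
    [[2,1,5,3,6,4], [3,6,2,5,4,1], [4,5,6,2,1,3], [5,4,1,6,3,2], [6,3,4,1,2,5]],
    [[2,4,5,6,3,1], [3,1,4,5,6,2], [4,3,6,2,1,5], [5,6,1,3,2,4], [6,5,2,1,4,3]],
    [[2,1,4,3,6,5], [3,6,2,5,1,4], [4,5,1,6,3,2], [5,3,6,2,4,1], [6,4,5,1,2,3]],
    [[2,5,1,3,6,4], [3,4,2,6,1,5], [4,1,6,5,2,3], [5,6,4,1,3,2], [6,3,5,2,4,1]],
    [[2,3,5,6,4,1], [3,6,4,2,1,5], [4,5,6,1,3,2], [5,1,2,3,6,4], [6,4,1,5,2,3]],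
    [[2,6,4,3,1,5], [3,1,6,5,2,4], [4,5,2,6,3,1], [5,4,1,2,6,3], [6,3,5,1,4,2]],
    [[2,1,6,5,3,4], [3,4,2,1,6,5], [4,3,5,6,2,1], [5,6,4,2,1,3], [6,5,1,3,4,2]],
    [[2,4,5,3,6,1], [3,1,6,2,4,5], [4,5,1,6,2,3], [5,6,2,1,3,4], [6,3,4,5,1,2]],
    [[2,4,5,6,1,3], [3,6,2,1,4,5], [4,3,6,5,2,1], [5,1,4,3,6,2], [6,5,1,2,3,4]],
    [[2,3,5,6,1,4], [3,6,1,5,4,2], [4,5,6,3,2,1], [5,1,4,2,6,3], [6,4,2,1,3,5]],
    [[2,6,5,3,1,4], [3,1,4,2,6,5], [4,5,6,1,2,3], [5,3,2,6,4,1], [6,4,1,5,3,2]],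
    [[2,3,6,5,1,4], [3,1,4,6,2,5], [4,6,5,1,3,2], [5,4,2,3,6,1], [6,5,1,2,4,3]],
    [[2,5,6,3,4,1], [3,4,5,1,6,2], [4,3,2,6,1,5], [5,6,1,2,3,4], [6,1,4,5,2,3]],
    [[2,3,6,5,4,1], [3,1,5,6,2,4], [4,6,1,2,3,5], [5,4,2,1,6,3], [6,5,4,3,1,2]],
    [[2,1,5,6,4,3], [3,4,6,2,1,5], [4,6,1,5,3,2], [5,3,2,1,6,4], [6,5,4,3,2,1]],
    [[2,6,5,1,3,4], [3,4,6,5,2,1], [4,5,1,3,6,2], [5,1,2,6,4,3], [6,3,4,2,1,5]],
    [[2,6,5,3,4,1], [3,4,6,1,2,5], [4,3,1,5,6,2], [5,1,2,6,3,4], [6,5,4,2,1,3]],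
    [[2,4,6,1,3,5], [3,6,5,2,1,4], [4,5,2,3,6,1], [5,1,4,6,2,3], [6,3,1,5,4,2]],
    [[2,4,6,3,1,5], [3,6,5,2,4,1], [4,5,2,1,6,3], [5,1,4,6,3,2], [6,3,1,5,2,4]],
    [[2,1,6,5,4,3], [3,4,1,6,2,5], [4,6,5,3,1,2], [5,3,4,2,6,1], [6,5,2,1,3,4]],
    [[2,6,5,1,4,3], [3,4,1,2,6,5], [4,1,6,5,3,2], [5,3,4,6,2,1], [6,5,2,3,1,4]]]"

lemma one_factorizations_L6_derangement_lists:
  "set (concat one_factorizations_L6) \<subseteq> derangement_lists 6"
proof -
  have "\<forall>xss\<in>set one_factorizations_L6. \<forall>xs\<in>set xss.
      length xs = 6 \<and> distinct xs \<and> set xs \<subseteq> {1..6} \<and> (\<forall>i<6. xs ! i \<noteq> Suc i)"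
    by (simp add: one_factorizations_L6_def all_less_numeral)
  then show ?thesis
    by (auto simp: mem_derangement_lists_iff)
qed

lemma one_factorizations_L6_rows:
  "\<forall>xss\<in>set one_factorizations_L6. length xss = 5 \<and> (\<forall>i<6. distinct (map (\<lambda>xs. xs ! i) xss))"
  by (simp add: one_factorizations_L6_def all_less_numeral)

lemma distinct_concat_one_factorizations_L6: "distinct (concat one_factorizations_L6)"
  by (simp add: one_factorizations_L6_def)

lemma card_derangement_lists_6: "card (derangement_lists 6) = 265"
  unfolding card_derangement_lists by code_simp

lemma set_concat_one_factorizations_L6:
  "set (concat one_factorizations_L6) = derangement_lists 6"
proof (rule card_subset_eq)
  show "finite (derangement_lists 6)"
    by (simp add: derangement_lists_def)
  have "length (concat one_factorizations_L6) = 265"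
    by (simp add: one_factorizations_L6_def)
  then show "card (set (concat one_factorizations_L6)) = card (derangement_lists 6)"
    using distinct_card[OF distinct_concat_one_factorizations_L6] card_derangement_lists_6
    by simp
qed (rule one_factorizations_L6_derangement_lists)

theorem theorem2p1:
  shows "card (derangements 6) = 265 \<and>
         (\<exists>P. partition_on (derangements 6) P \<and>
              (\<forall>S\<in>P. card S = 5 \<and> sums_to_JmI 6 S))"
proof (intro conjI exI)
  let ?P = "(`) perm_of_list ` set ` set one_factorizations_L6 - {{}}"
  note bij = bij_betw_perm_of_list_derangements[of 6]
  show "card (derangements 6) = 265"
    using bij_betw_same_card[OF bij] card_derangement_lists_6 by simp
  have "[] \<notin> set one_factorizations_L6"
    using one_factorizations_L6_rows by auto
  from partition_on_set_concat[OF distinct_concat_one_factorizations_L6 this]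
  have "partition_on (derangement_lists 6) (set ` set one_factorizations_L6)"
    by (simp only: set_concat_one_factorizations_L6)
  from partition_on_inj_image[OF this bij_betw_imp_inj_on[OF bij]]
  show "partition_on (derangements 6) ?P"
    by (simp only: bij_betw_imp_surj_on[OF bij])
  show "\<forall>S\<in>?P. card S = 5 \<and> sums_to_JmI 6 S"
  proof
    fix S assume "S \<in> ?P"
    then obtain xss where xss: "xss \<in> set one_factorizations_L6" and S: "S = perm_of_list ` set xss"
      by blast
    have "set xss \<subseteq> derangement_lists 6"
      using xss one_factorizations_L6_derangement_lists by auto
    moreover have "length xss = 6 - 1" "\<forall>i<6. distinct (map (\<lambda>xs. xs ! i) xss)"
      using xss one_factorizations_L6_rows by simp_all
    ultimately have "card S = 6 - 1 \<and> sums_to_JmI 6 S"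
      unfolding S by (rule one_factorization_perm_of_list)
    then show "card S = 5 \<and> sums_to_JmI 6 S"
      by simp
  qed
qed

end
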